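(* Let $I=\begin{pmatrix}1&0\\0&1\end{pmatrix}$, $X=\begin{pmatrix}0&1\\1&0\end{pmatrix}$, $Z=\begin{pmatrix}1&0\\0&-1\end{pmatrix}$ and $Y=XZ$. For each $M:=M_1\otimes M_2\otimes M_3$ with $M_i\in\{I,X,Y,Z\}$ (an $8\times 8$ real matrix), the map $\sigma_M:V(G_{E_8})\to V(G_{E_8})$, $v_x\mapsto v_{Mx}$, is a well-defined automorphism of $G_{E_8}$. These automorphisms form a subgroup $L$ of $\mathrm{Aut}(G_{E_8})$ with $L\cong\mathbb{Z}_2^6$.
   Context: The $E_8$ root system $\Psi_{E_8}\subset\mathbb{R}^8$ consists of the 240 vectors $\pm e_i\pm e_j$ for $1\le i<j\le 8$, together with all $x=(x_1,\dots,x_8)$ with $x_i\in\{\pm1\}$ and $\prod_{i=1}^8x_i=1$. The graph $G_{E_8}$ has vertex set $\{v_x : x\in\Psi_{E_8}\}$ where $v_x=v_{-x}$ (so 120 vertices, one per line), and $v_x,v_y$ are adjacent iff $\langle x,y\rangle=0$ (standard inner product). *)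

theory Defs
  imports Complex_Main "HOL-Algebra.Algebra"
begin

text \<open>Vectors of R^8 are represented as real lists of length 8; coordinate e_(k+1) is
  list index k (k = 0..7). 8x8 (and 2x2) real matrices are functions nat => nat => real,
  only entries with indices below the dimension being relevant.\<close>

definition inner8 :: "real list \<Rightarrow> real list \<Rightarrow> real" where
  "inner8 x y = (\<Sum>k<8. x ! k * y ! k)"

definition E8_roots :: "real list set" where
  "E8_roots =
     {map (\<lambda>k. if k = i then s else if k = j then t else 0) [0..<8] | i j s t.
        i < j \<and> j < 8 \<and> s \<in> {1, -1} \<and> t \<in> {1, -1}}
   \<union> {x. length x = 8 \<and> (\<forall>k<8. x ! k \<in> {1, -1}) \<and> prod_list x = 1}"

text \<open>Vertex v_x = v_(-x): represented as the line {x, -x}.\<close>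
definition vtx :: "real list \<Rightarrow> real list set" where
  "vtx x = {x, map uminus x}"

definition V_E8 :: "real list set set" where
  "V_E8 = vtx ` E8_roots"

definition adj_E8 :: "real list set \<Rightarrow> real list set \<Rightarrow> bool" where
  "adj_E8 u v \<longleftrightarrow> (\<exists>x y. x \<in> E8_roots \<and> y \<in> E8_roots \<and> u = vtx x \<and> v = vtx y \<and> inner8 x y = 0)"

definition is_aut_E8 :: "(real list set \<Rightarrow> real list set) \<Rightarrow> bool" where
  "is_aut_E8 f \<longleftrightarrow> bij_betw f V_E8 V_E8 \<and>
     (\<forall>u\<in>V_E8. \<forall>v\<in>V_E8. adj_E8 (f u) (f v) \<longleftrightarrow> adj_E8 u v)"

text \<open>Aut(G_E8) as a subgroup of the group of bijections of the vertex set
  (functions are extensional, i.e. undefined outside V_E8).\<close>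
definition Aut_E8 :: "(real list set \<Rightarrow> real list set) monoid" where
  "Aut_E8 = (BijGroup V_E8)\<lparr>carrier := {f \<in> Bij V_E8. is_aut_E8 f}\<rparr>"

definition matI :: "nat \<Rightarrow> nat \<Rightarrow> real" where
  "matI i j = (if i = j then 1 else 0)"
definition matX :: "nat \<Rightarrow> nat \<Rightarrow> real" where
  "matX i j = (if i \<noteq> j then 1 else 0)"
definition matZ :: "nat \<Rightarrow> nat \<Rightarrow> real" where
  "matZ i j = (if i = j then (if i = 0 then 1 else -1) else 0)"

definition matmul2 :: "(nat \<Rightarrow> nat \<Rightarrow> real) \<Rightarrow> (nat \<Rightarrow> nat \<Rightarrow> real) \<Rightarrow> nat \<Rightarrow> nat \<Rightarrow> real" where
  "matmul2 A B i j = (\<Sum>k<2. A i k * B k j)"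

definition matY :: "nat \<Rightarrow> nat \<Rightarrow> real" where
  "matY = matmul2 matX matZ"

definition paulis :: "(nat \<Rightarrow> nat \<Rightarrow> real) set" where
  "paulis = {matI, matX, matY, matZ}"

text \<open>Kronecker product M1 (x) M2 (x) M3 of 2x2 matrices (standard convention:
  row index i = 4 a1 + 2 a2 + a3, 0-based).\<close>
definition kron3 :: "(nat \<Rightarrow> nat \<Rightarrow> real) \<Rightarrow> (nat \<Rightarrow> nat \<Rightarrow> real) \<Rightarrow> (nat \<Rightarrow> nat \<Rightarrow> real)
                     \<Rightarrow> nat \<Rightarrow> nat \<Rightarrow> real" where
  "kron3 A B C i j = A (i div 4) (j div 4) * B (i div 2 mod 2) (j div 2 mod 2) * C (i mod 2) (j mod 2)"

definition pauli_mats :: "(nat \<Rightarrow> nat \<Rightarrow> real) set" where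
  "pauli_mats = {kron3 A B C | A B C. A \<in> paulis \<and> B \<in> paulis \<and> C \<in> paulis}"

definition mulv8 :: "(nat \<Rightarrow> nat \<Rightarrow> real) \<Rightarrow> real list \<Rightarrow> real list" where
  "mulv8 M x = map (\<lambda>i. \<Sum>j<8. M i j * x ! j) [0..<8]"

definition sigma :: "(nat \<Rightarrow> nat \<Rightarrow> real) \<Rightarrow> real list set \<Rightarrow> real list set" where
  "sigma M = restrict (\<lambda>v. mulv8 M ` v) V_E8"

definition L_E8 :: "(real list set \<Rightarrow> real list set) set" where
  "L_E8 = sigma ` pauli_mats"

end

theory Submission
  imports Defs
begin

text \<open>
  Write a matrix of the family as X^a Z^b with a, b in F_2^3 (one bit per tensor factor).
  It is a signed permutation matrix: it moves coordinate j to j xor a and multiplies it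
  by (-1)^(b.j). For b \<noteq> 0 exactly four coordinates get the sign -1, so the signs
  multiply to 1; hence the matrix maps the roots +-e_i +- e_j and the sign vectors
  of product 1 to roots, and being orthogonal it preserves orthogonality of lines. Since
  X^a Z^b X^a' Z^b' = (-1)^(b.a') X^(a+a') Z^(b+b') and \<sigma>_M only sees M up to sign,
  M \<mapsto> \<sigma>_M is a homomorphism from Z_2^6. It is injective: unless a = 0 a line through
  e_1 + e_2 or e_1 + e_3 is moved, and for a = 0 the lines through e_1 + e_2, e_1 + e_3
  and e_1 + e_5 detect the three bits of b.
\<close>

section \<open>Signed permutations of coordinates\<close>

definition signed_perm :: "(nat \<Rightarrow> real) \<Rightarrow> (nat \<Rightarrow> nat) \<Rightarrow> real list \<Rightarrow> real list" where
  "signed_perm c p x = map (\<lambda>i. c i * x ! p i) [0..<8]"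

definition even_signed_perm :: "(nat \<Rightarrow> real) \<Rightarrow> (nat \<Rightarrow> nat) \<Rightarrow> bool" where
  "even_signed_perm c p \<longleftrightarrow>
     bij_betw p {..<8} {..<8} \<and> (\<forall>i<8. c i \<in> {1, -1}) \<and> (\<Prod>i<8. c i) = 1"

lemma length_signed_perm [simp]: "length (signed_perm c p x) = 8"
  by (simp add: signed_perm_def)

lemma nth_signed_perm [simp]: "k < 8 \<Longrightarrow> signed_perm c p x ! k = c k * x ! p k"
  by (simp add: signed_perm_def)

lemma even_signed_perm_lt:
  "even_signed_perm c p \<Longrightarrow> i < 8 \<Longrightarrow> p i < 8"
  unfolding even_signed_perm_def using bij_betw_apply by fastforce

lemma signed_perm_signed_perm:
  assumes "\<And>i. i < 8 \<Longrightarrow> p i < 8"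
  shows "signed_perm c p (signed_perm c' p' x) = signed_perm (\<lambda>i. c i * c' (p i)) (p' \<circ> p) x"
  using assms by (intro nth_equalityI) auto

lemma signed_perm_cong:
  "(\<And>i. i < 8 \<Longrightarrow> c i = c' i \<and> p i = p' i) \<Longrightarrow> signed_perm c p x = signed_perm c' p' x"
  unfolding signed_perm_def by (rule map_cong) auto

lemma signed_perm_uminus:
  assumes "\<And>i. i < 8 \<Longrightarrow> p i < 8" "length x = 8"
  shows "signed_perm c p (map uminus x) = map uminus (signed_perm c p x)"
  using assms by (intro nth_equalityI) auto

lemma vtx_signed_perm_scale:
  assumes "e \<in> {1, -1}"
  shows "vtx (signed_perm (\<lambda>i. e * c i) p x) = vtx (signed_perm c p x)"
proof -
  have "signed_perm (\<lambda>i. - c i) p x = map uminus (signed_perm c p x)"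
    by (intro nth_equalityI) auto
  then show ?thesis
    using assms by (auto simp: vtx_def)
qed

lemma inner8_signed_perm:
  assumes "even_signed_perm c p"
  shows "inner8 (signed_perm c p x) (signed_perm c p y) = inner8 x y"
proof -
  have "inner8 (signed_perm c p x) (signed_perm c p y) = (\<Sum>k<8. x ! p k * y ! p k)"
    unfolding inner8_def
    using assms by (intro sum.cong) (auto simp: even_signed_perm_def)
  also have "\<dots> = inner8 x y"
    unfolding inner8_def
    using assms by (intro sum.reindex_bij_betw) (simp add: even_signed_perm_def)
  finally show ?thesis .
qed

lemma E8_root_pair:
  assumes "i \<noteq> j" "i < 8" "j < 8" "s \<in> {1, -1}" "t \<in> {1, -1}"
  shows "map (\<lambda>k. if k = i then s else if k = j then t else 0) [0..<8] \<in> E8_roots"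
proof -
  have ordered: "map (\<lambda>k. if k = i then s else if k = j then t else 0) [0..<8] \<in> E8_roots"
    if "i < j" "j < 8" "s \<in> {1, -1}" "t \<in> {1, -1}" for i j s t
    using that unfolding E8_roots_def by (intro UnI1) blast
  show ?thesis
  proof (cases "i < j")
    case True
    then show ?thesis
      by (rule ordered[OF _ assms(3-5)])
  next
    case False
    then have "j < i"
      using assms(1) by simp
    then have "map (\<lambda>k. if k = j then t else if k = i then s else 0) [0..<8] \<in> E8_roots"
      by (rule ordered[OF _ assms(2) assms(5) assms(4)])
    moreover have "map (\<lambda>k. if k = i then s else if k = j then t else 0) [0..<8] =
                   map (\<lambda>k. if k = j then t else if k = i then s else 0) [0..<8]"
      using assms(1) by auto
    ultimately show ?thesis
      by (simp only:)
  qed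
qed

lemma prod_list_as_prod: "prod_list xs = (\<Prod>i<length xs. xs ! i)"
  by (simp add: prod.list_conv_set_nth atLeast0LessThan)

lemma signed_perm_E8_roots:
  assumes sp: "even_signed_perm c p" and x: "x \<in> E8_roots"
  shows "signed_perm c p x \<in> E8_roots"
proof -
  have bij: "bij_betw p {..<8} {..<8}" and sign: "\<And>i. i < 8 \<Longrightarrow> c i \<in> {1, -1}"
    and prod_c: "(\<Prod>i<8. c i) = 1"
    using sp by (auto simp: even_signed_perm_def)
  from x consider
    (pair) i j s t where "x = map (\<lambda>k. if k = i then s else if k = j then t else 0) [0..<8]"
      "i < j" "j < 8" "s \<in> {1, -1}" "t \<in> {1, -1}"
  | (signs) "length x = 8" "\<forall>k<8. x ! k \<in> {1, -1}" "prod_list x = 1"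
    unfolding E8_roots_def by blast
  then show ?thesis
  proof cases
    case pair
    define q where "q = inv_into {..<8} p"
    have q: "q i < 8" "q j < 8" "q i \<noteq> q j"
      using pair bij_betw_inv_into[OF bij] unfolding q_def
      by (auto dest: bij_betw_apply simp: bij_betw_def inj_on_def)
    have p_eq: "p k = m \<longleftrightarrow> k = q m" if "k < 8" "m < 8" for k m
      using that bij_betw_inv_into_left[OF bij] bij_betw_inv_into_right[OF bij] unfolding q_def
      by auto
    have "signed_perm c p x =
        map (\<lambda>k. if k = q i then c (q i) * s else if k = q j then c (q j) * t else 0) [0..<8]"
      using pair p_eq even_signed_perm_lt[OF sp] by (intro nth_equalityI) auto
    moreover have "c (q i) * s \<in> {1, -1}" "c (q j) * t \<in> {1, -1}"
      using sign[OF q(1)] sign[OF q(2)] pair by auto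
    ultimately show ?thesis
      using E8_root_pair q by simp
  next
    case signs
    have "prod_list (signed_perm c p x) = (\<Prod>k<8. c k) * (\<Prod>k<8. x ! p k)"
      by (simp add: prod_list_as_prod prod.distrib)
    also have "\<dots> = prod_list x"
      using prod_c signs bij by (simp add: prod_list_as_prod prod.reindex_bij_betw)
    finally have "prod_list (signed_perm c p x) = 1"
      using signs by simp
    moreover have "signed_perm c p x ! k \<in> {1, -1}" if "k < 8" for k
      using that sign[OF that] signs even_signed_perm_lt[OF sp that] by auto
    ultimately show ?thesis
      unfolding E8_roots_def by auto
  qed
qed

lemma vtx_eq_iff: "vtx x' = vtx x \<longleftrightarrow> x' = x \<or> x' = map uminus x"
  by (auto simp: vtx_def comp_def)

lemma inner8_uminus_left: "length x = 8 \<Longrightarrow> inner8 (map uminus x) y = - inner8 x y"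
  by (simp add: inner8_def sum_negf[symmetric])

lemma inner8_uminus_right: "length y = 8 \<Longrightarrow> inner8 x (map uminus y) = - inner8 x y"
  by (simp add: inner8_def sum_negf[symmetric])

lemma adj_E8_vtx_iff:
  assumes "x \<in> E8_roots" "y \<in> E8_roots"
  shows "adj_E8 (vtx x) (vtx y) \<longleftrightarrow> inner8 x y = 0"
proof
  assume "adj_E8 (vtx x) (vtx y)"
  then obtain x' y' where "vtx x' = vtx x" "vtx y' = vtx y" "inner8 x' y' = 0"
    unfolding adj_E8_def by metis
  moreover have "length x = 8" "length y = 8"
    using assms by (auto simp: E8_roots_def)
  ultimately show "inner8 x y = 0"
    by (auto simp: vtx_eq_iff inner8_uminus_left inner8_uminus_right)
next
  assume "inner8 x y = 0"
  then show "adj_E8 (vtx x) (vtx y)"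
    using assms unfolding adj_E8_def by blast
qed

lemma subgroup_BijGroup_preserving:
  "subgroup {f \<in> Bij V. \<forall>u\<in>V. \<forall>v\<in>V. R (f u) (f v) \<longleftrightarrow> R u v} (BijGroup V)"
  (is "subgroup ?H _")
proof (rule group.subgroupI[OF group_BijGroup])
  show "?H \<subseteq> carrier (BijGroup V)"
    by (auto simp: BijGroup_def)
  show "?H \<noteq> {}"
    using id_Bij by fastforce
next
  fix f assume f: "f \<in> ?H"
  then have bij: "bij_betw f V V"
    by (simp add: Bij_def)
  have "R (inv_into V f u) (inv_into V f v) \<longleftrightarrow> R u v" if "u \<in> V" "v \<in> V" for u v
  proof -
    have "inv_into V f u \<in> V" "inv_into V f v \<in> V"
      using f that by (simp_all add: Bij_inv_into_mem)
    moreover have "f (inv_into V f u) = u" "f (inv_into V f v) = v"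
      using bij that by (simp_all add: bij_betw_inv_into_right)
    ultimately show ?thesis
      using f by force
  qed
  then show "inv\<^bsub>BijGroup V\<^esub> f \<in> ?H"
    using f by (simp add: inv_BijGroup restrict_inv_into_Bij)
next
  fix f g assume f: "f \<in> ?H" and g: "g \<in> ?H"
  have "compose V f g \<in> Bij V"
    using f g by (simp add: compose_Bij)
  moreover have "g u \<in> V" if "u \<in> V" for u
    using g that Bij_imp_funcset by blast
  ultimately show "f \<otimes>\<^bsub>BijGroup V\<^esub> g \<in> ?H"
    using f g by (simp add: BijGroup_def compose_def)
qed

lemma carrier_Aut_E8:
  "carrier Aut_E8 = {f \<in> Bij V_E8. \<forall>u\<in>V_E8. \<forall>v\<in>V_E8. adj_E8 (f u) (f v) \<longleftrightarrow> adj_E8 u v}"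
  by (simp add: Aut_E8_def is_aut_E8_def Bij_def BijGroup_def)

lemma group_Aut_E8: "group Aut_E8"
proof -
  have "Aut_E8 = (BijGroup V_E8)\<lparr>carrier :=
      {f \<in> Bij V_E8. \<forall>u\<in>V_E8. \<forall>v\<in>V_E8. adj_E8 (f u) (f v) \<longleftrightarrow> adj_E8 u v}\<rparr>"
    unfolding carrier_Aut_E8[symmetric] by (simp add: Aut_E8_def)
  then show ?thesis
    using subgroup.subgroup_is_group[OF subgroup_BijGroup_preserving[of V_E8 adj_E8] group_BijGroup]
    by simp
qed

lemma mult_Aut_E8:
  "f \<in> carrier Aut_E8 \<Longrightarrow> f' \<in> carrier Aut_E8 \<Longrightarrow> f \<otimes>\<^bsub>Aut_E8\<^esub> f' = compose V_E8 f f'"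
  by (simp add: Aut_E8_def BijGroup_def)

lemma sigma_vtx:
  assumes M: "mulv8 M = signed_perm c p" and sp: "even_signed_perm c p" and x: "x \<in> E8_roots"
  shows "sigma M (vtx x) = vtx (signed_perm c p x)"
proof -
  have "length x = 8"
    using x by (auto simp: E8_roots_def)
  then have "signed_perm c p (map uminus x) = map uminus (signed_perm c p x)"
    using signed_perm_uminus even_signed_perm_lt[OF sp] by blast
  moreover have "vtx x \<in> V_E8"
    using x by (simp add: V_E8_def)
  ultimately show ?thesis
    by (simp add: sigma_def M vtx_def)
qed

lemma sigma_in_V_E8:
  assumes "mulv8 M = signed_perm c p" "even_signed_perm c p" "v \<in> V_E8"
  shows "sigma M v \<in> V_E8"
  using assms sigma_vtx signed_perm_E8_roots by (fastforce simp: V_E8_def)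

lemma sigma_preserves_adj_E8:
  assumes M: "mulv8 M = signed_perm c p" and sp: "even_signed_perm c p"
    and u: "u \<in> V_E8" and v: "v \<in> V_E8"
  shows "adj_E8 (sigma M u) (sigma M v) \<longleftrightarrow> adj_E8 u v"
proof -
  obtain x y where x: "x \<in> E8_roots" "u = vtx x" and y: "y \<in> E8_roots" "v = vtx y"
    using u v by (auto simp: V_E8_def)
  show ?thesis
    using x y sigma_vtx[OF M sp] adj_E8_vtx_iff signed_perm_E8_roots[OF sp]
      inner8_signed_perm[OF sp] by simp
qed

lemma sigma_in_Aut_E8:
  assumes M: "mulv8 M = signed_perm c p" and sp: "even_signed_perm c p"
    and invol: "\<And>v. v \<in> V_E8 \<Longrightarrow> sigma M (sigma M v) = v"
  shows "sigma M \<in> carrier Aut_E8"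
proof -
  have "bij_betw (sigma M) V_E8 V_E8"
    using sigma_in_V_E8[OF M sp] invol by (intro bij_betw_byWitness[of _ "sigma M"]) auto
  then have "sigma M \<in> Bij V_E8"
    by (simp add: Bij_def sigma_def)
  then show ?thesis
    using sigma_preserves_adj_E8[OF M sp] by (simp add: carrier_Aut_E8)
qed

definition monomial_matrix :: "nat \<Rightarrow> (nat \<Rightarrow> nat) \<Rightarrow> (nat \<Rightarrow> real) \<Rightarrow> (nat \<Rightarrow> nat \<Rightarrow> real) \<Rightarrow> bool"
  where "monomial_matrix n p c M \<longleftrightarrow>
    (\<forall>i<n. p i < n \<and> (\<forall>j<n. M i j = (if j = p i then c i else 0)))"

lemma mulv8_monomial_matrix:
  assumes "monomial_matrix 8 p c M"
  shows "mulv8 M = signed_perm c p"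
proof
  fix x
  have "(\<Sum>j<8. M i j * x ! j) = c i * x ! p i" if "i < 8" for i
  proof -
    have "(\<Sum>j<8. M i j * x ! j) = (\<Sum>j<8. if j = p i then c i * x ! j else 0)"
      using assms that by (intro sum.cong) (auto simp: monomial_matrix_def)
    also have "\<dots> = c i * x ! p i"
      using assms that by (simp add: monomial_matrix_def)
    finally show ?thesis .
  qed
  then show "mulv8 M x = signed_perm c p x"
    by (simp add: mulv8_def signed_perm_def)
qed

lemma base2_digits:
  fixes j u v w :: nat
  assumes "j < 8" "u < 2" "v < 2" "w < 2"
  shows "j = 4 * u + 2 * v + w \<longleftrightarrow> j div 4 = u \<and> j div 2 mod 2 = v \<and> j mod 2 = w"
proof
  have "u = 0 \<or> u = 1" "v = 0 \<or> v = 1" "w = 0 \<or> w = 1"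
    using assms by auto
  then show "j = 4 * u + 2 * v + w \<Longrightarrow> j div 4 = u \<and> j div 2 mod 2 = v \<and> j mod 2 = w"
    by (elim disjE) simp_all
next
  have "j = 0 \<or> j = 1 \<or> j = 2 \<or> j = 3 \<or> j = 4 \<or> j = 5 \<or> j = 6 \<or> j = 7"
    using assms by linarith
  then show "j div 4 = u \<and> j div 2 mod 2 = v \<and> j mod 2 = w \<Longrightarrow> j = 4 * u + 2 * v + w"
    by (elim disjE) auto
qed

lemma monomial_matrix_kron3:
  assumes A: "monomial_matrix 2 p1 c1 A" and B: "monomial_matrix 2 p2 c2 B"
    and C: "monomial_matrix 2 p3 c3 C"
  shows "monomial_matrix 8 (\<lambda>i. 4 * p1 (i div 4) + 2 * p2 (i div 2 mod 2) + p3 (i mod 2))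
           (\<lambda>i. c1 (i div 4) * c2 (i div 2 mod 2) * c3 (i mod 2)) (kron3 A B C)"
  unfolding monomial_matrix_def
proof (intro allI impI conjI)
  fix i :: nat assume i: "i < 8"
  have digits_i: "i div 4 < 2" "i div 2 mod 2 < 2" "i mod 2 < 2"
    using i by auto
  then have p: "p1 (i div 4) < 2" "p2 (i div 2 mod 2) < 2" "p3 (i mod 2) < 2"
    using A B C by (auto simp: monomial_matrix_def)
  then show "4 * p1 (i div 4) + 2 * p2 (i div 2 mod 2) + p3 (i mod 2) < 8"
    by linarith
  fix j :: nat assume j: "j < 8"
  then have "j div 4 < 2" "j div 2 mod 2 < 2" "j mod 2 < 2"
    by auto
  then show "kron3 A B C i j = (if j = 4 * p1 (i div 4) + 2 * p2 (i div 2 mod 2) + p3 (i mod 2)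
      then c1 (i div 4) * c2 (i div 2 mod 2) * c3 (i mod 2) else 0)"
    using A B C digits_i base2_digits[OF j p]
    by (simp add: kron3_def monomial_matrix_def)
qed

section \<open>Pauli matrices\<close>

definition pauli :: "bool \<Rightarrow> bool \<Rightarrow> nat \<Rightarrow> nat \<Rightarrow> real" where
  "pauli a b = (if a then if b then matY else matX else if b then matZ else matI)"

definition bit_flip :: "bool \<Rightarrow> nat \<Rightarrow> nat" where
  "bit_flip a i = (if a then 1 - i else i)"

definition bit_sign :: "bool \<Rightarrow> nat \<Rightarrow> real" where
  "bit_sign b j = (if b \<and> j = 1 then -1 else 1)"

lemma paulis_eq: "paulis = {pauli a b | a b. True}"
  unfolding paulis_def pauli_def by auto

lemma monomial_matrix_pauli:
  "monomial_matrix 2 (bit_flip a) (\<lambda>i. bit_sign b (bit_flip a i)) (pauli a b)"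
proof -
  have "matY 0 0 = 0" "matY 0 1 = -1" "matY 1 0 = 1" "matY 1 1 = 0"
    by (simp_all add: matY_def matmul2_def matX_def matZ_def numeral_2_eq_2)
  moreover have "i < 2 \<longleftrightarrow> i = 0 \<or> i = 1" for i :: nat
    by auto
  ultimately show ?thesis
    unfolding monomial_matrix_def pauli_def bit_flip_def bit_sign_def
    by (auto simp: matI_def matX_def matZ_def)
qed

lemma bit_flip_lt: "i < 2 \<Longrightarrow> bit_flip a i < 2"
  by (auto simp: bit_flip_def)

lemma bit_flip_bit_flip: "i < 2 \<Longrightarrow> bit_flip a' (bit_flip a i) = bit_flip (a \<noteq> a') i"
  by (auto simp: bit_flip_def)

lemma bit_sign_commute:
  assumes "i < 2"
  shows "bit_sign b (bit_flip a i) * bit_sign b' (bit_flip a' (bit_flip a i)) =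
    (if b \<and> a' then -1 else 1) * bit_sign (b \<noteq> b') (bit_flip (a \<noteq> a') i)"
proof -
  have "i = 0 \<or> i = 1"
    using assms by auto
  then show ?thesis
    by (cases a; cases b; cases a'; cases b') (auto simp: bit_flip_def bit_sign_def)
qed

text \<open>
  With the bits a k, b k (k = 0, 1, 2) of weights 4, 2, 1, \<open>pauli8 a b\<close> is X^a Z^b on
  (R^2)^(\<otimes>3): it sends e_j to \<open>z_sign b j\<close> e_(j xor a), and \<open>z_sign b j\<close> = (-1)^(b.j).
  \<open>commutation_sign b a\<close> = (-1)^(b.a) is the sign in Z^b X^a = (-1)^(b.a) X^a Z^b.
\<close>

definition pauli8 :: "(nat \<Rightarrow> bool) \<Rightarrow> (nat \<Rightarrow> bool) \<Rightarrow> nat \<Rightarrow> nat \<Rightarrow> real" where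
  "pauli8 a b = kron3 (pauli (a 0) (b 0)) (pauli (a 1) (b 1)) (pauli (a 2) (b 2))"

definition xor_perm :: "(nat \<Rightarrow> bool) \<Rightarrow> nat \<Rightarrow> nat" where
  "xor_perm a i =
     4 * bit_flip (a 0) (i div 4) + 2 * bit_flip (a 1) (i div 2 mod 2) + bit_flip (a 2) (i mod 2)"

definition z_sign :: "(nat \<Rightarrow> bool) \<Rightarrow> nat \<Rightarrow> real" where
  "z_sign b j = bit_sign (b 0) (j div 4) * bit_sign (b 1) (j div 2 mod 2) * bit_sign (b 2) (j mod 2)"

definition commutation_sign :: "(nat \<Rightarrow> bool) \<Rightarrow> (nat \<Rightarrow> bool) \<Rightarrow> real" where
  "commutation_sign b a = (\<Prod>k<3. if b k \<and> a k then -1 else 1)"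

lemma xor_perm_lt: "i < 8 \<Longrightarrow> xor_perm a i < 8"
  using bit_flip_lt[of "i div 4" "a 0"] bit_flip_lt[of "i div 2 mod 2" "a 1"]
    bit_flip_lt[of "i mod 2" "a 2"]
  unfolding xor_perm_def by linarith

lemma xor_perm_digits:
  assumes "i < 8"
  shows "xor_perm a i div 4 = bit_flip (a 0) (i div 4)"
    "xor_perm a i div 2 mod 2 = bit_flip (a 1) (i div 2 mod 2)"
    "xor_perm a i mod 2 = bit_flip (a 2) (i mod 2)"
proof -
  have digits: "i div 4 < 2" "i div 2 mod 2 < 2" "i mod 2 < 2"
    using assms by auto
  show "xor_perm a i div 4 = bit_flip (a 0) (i div 4)"
    "xor_perm a i div 2 mod 2 = bit_flip (a 1) (i div 2 mod 2)"
    "xor_perm a i mod 2 = bit_flip (a 2) (i mod 2)"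
    using base2_digits[OF xor_perm_lt[OF assms, of a] bit_flip_lt[OF digits(1), of "a 0"]
        bit_flip_lt[OF digits(2), of "a 1"] bit_flip_lt[OF digits(3), of "a 2"]]
    by (simp_all add: xor_perm_def)
qed

lemma xor_perm_xor_perm:
  "i < 8 \<Longrightarrow> xor_perm a' (xor_perm a i) = xor_perm (\<lambda>k. a k \<noteq> a' k) i"
  by (simp add: xor_perm_def[of a'] xor_perm_digits bit_flip_bit_flip) (simp add: xor_perm_def)

lemma xor_perm_id: "\<not> a 0 \<Longrightarrow> \<not> a 1 \<Longrightarrow> \<not> a 2 \<Longrightarrow> i < 8 \<Longrightarrow> xor_perm a i = i"
  using base2_digits[of i "i div 4" "i div 2 mod 2" "i mod 2"] by (simp add: xor_perm_def bit_flip_def)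

lemma xor_perm_involution: "i < 8 \<Longrightarrow> xor_perm a (xor_perm a i) = i"
  by (simp add: xor_perm_xor_perm xor_perm_id)

lemma z_sign_commute:
  assumes "i < 8"
  shows "z_sign b (xor_perm a i) * z_sign b' (xor_perm a' (xor_perm a i)) =
    commutation_sign b a' * z_sign (\<lambda>k. b k \<noteq> b' k) (xor_perm (\<lambda>k. a k \<noteq> a' k) i)"
proof -
  let ?f = "\<lambda>k d. bit_sign (b k) (bit_flip (a k) d) * bit_sign (b' k) (bit_flip (a' k) (bit_flip (a k) d))"
  have digits: "i div 4 < 2" "i div 2 mod 2 < 2" "i mod 2 < 2"
    using assms by auto
  have "z_sign b (xor_perm a i) * z_sign b' (xor_perm a' (xor_perm a i)) =
      ?f 0 (i div 4) * ?f 1 (i div 2 mod 2) * ?f 2 (i mod 2)"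
    using assms by (simp add: z_sign_def xor_perm_digits xor_perm_lt mult_ac)
  also have "\<dots> =
      (if b 0 \<and> a' 0 then -1 else 1) * bit_sign (b 0 \<noteq> b' 0) (bit_flip (a 0 \<noteq> a' 0) (i div 4)) *
      ((if b 1 \<and> a' 1 then -1 else 1) *
        bit_sign (b 1 \<noteq> b' 1) (bit_flip (a 1 \<noteq> a' 1) (i div 2 mod 2))) *
      ((if b 2 \<and> a' 2 then -1 else 1) * bit_sign (b 2 \<noteq> b' 2) (bit_flip (a 2 \<noteq> a' 2) (i mod 2)))"
    by (simp only: bit_sign_commute digits)
  also have "\<dots> = commutation_sign b a' * z_sign (\<lambda>k. b k \<noteq> b' k) (xor_perm (\<lambda>k. a k \<noteq> a' k) i)"
    unfolding commutation_sign_def z_sign_def xor_perm_digits[OF assms]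
    by (simp only: numeral_3_eq_3 prod.lessThan_Suc lessThan_0 prod.empty mult_1 One_nat_def numeral_2_eq_2 mult_ac)
  finally show ?thesis .
qed

lemma commutation_sign_cases: "commutation_sign b a \<in> {1, -1}"
  unfolding commutation_sign_def
  by (cases "b 0 \<and> a 0"; cases "b 1 \<and> a 1"; cases "b 2 \<and> a 2")
    (simp_all add: numeral_3_eq_3 lessThan_Suc)

lemma z_sign_cases: "z_sign b j \<in> {1, -1}"
  unfolding z_sign_def bit_sign_def by auto

lemma prod_z_sign: "(\<Prod>j<8. z_sign b j) = 1"
proof -
  have "{..<8::nat} = {0, 1, 2, 3, 4, 5, 6, 7}"
    by auto
  then show ?thesis
    by (cases "b 0"; cases "b 1"; cases "b 2") (simp_all add: z_sign_def bit_sign_def)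
qed

lemma monomial_matrix_pauli8:
  "monomial_matrix 8 (xor_perm a) (\<lambda>i. z_sign b (xor_perm a i)) (pauli8 a b)"
proof -
  have "monomial_matrix 8 (xor_perm a)
      (\<lambda>i. bit_sign (b 0) (bit_flip (a 0) (i div 4)) * bit_sign (b 1) (bit_flip (a 1) (i div 2 mod 2)) *
        bit_sign (b 2) (bit_flip (a 2) (i mod 2))) (pauli8 a b)"
    unfolding pauli8_def xor_perm_def[abs_def]
    by (rule monomial_matrix_kron3[OF monomial_matrix_pauli monomial_matrix_pauli
          monomial_matrix_pauli])
  then show ?thesis
    by (simp add: monomial_matrix_def z_sign_def xor_perm_digits)
qed

lemma mulv8_pauli8: "mulv8 (pauli8 a b) = signed_perm (\<lambda>i. z_sign b (xor_perm a i)) (xor_perm a)"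
  by (rule mulv8_monomial_matrix[OF monomial_matrix_pauli8])

lemma even_signed_perm_pauli8: "even_signed_perm (\<lambda>i. z_sign b (xor_perm a i)) (xor_perm a)"
  unfolding even_signed_perm_def
proof (intro conjI allI impI)
  show bij: "bij_betw (xor_perm a) {..<8} {..<8}"
    by (rule bij_betw_byWitness[of _ "xor_perm a"]) (auto simp: xor_perm_involution xor_perm_lt)
  show "(\<Prod>i<8. z_sign b (xor_perm a i)) = 1"
    using prod.reindex_bij_betw[OF bij, of "z_sign b"] prod_z_sign by simp
qed (rule z_sign_cases)

lemma sigma_pauli8_vtx:
  "x \<in> E8_roots \<Longrightarrow>
    sigma (pauli8 a b) (vtx x) = vtx (signed_perm (\<lambda>i. z_sign b (xor_perm a i)) (xor_perm a) x)"
  by (rule sigma_vtx[OF mulv8_pauli8 even_signed_perm_pauli8])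

lemma sigma_pauli8_sigma_pauli8:
  assumes "v \<in> V_E8"
  shows "sigma (pauli8 a b) (sigma (pauli8 a' b') v) =
    sigma (pauli8 (\<lambda>k. a k \<noteq> a' k) (\<lambda>k. b k \<noteq> b' k)) v"
proof -
  obtain x where x: "x \<in> E8_roots" "v = vtx x"
    using assms by (auto simp: V_E8_def)
  let ?a = "\<lambda>k. a k \<noteq> a' k" and ?b = "\<lambda>k. b k \<noteq> b' k"
  have "sigma (pauli8 a b) (sigma (pauli8 a' b') v) =
      vtx (signed_perm (\<lambda>i. z_sign b (xor_perm a i)) (xor_perm a)
        (signed_perm (\<lambda>i. z_sign b' (xor_perm a' i)) (xor_perm a') x))"
    using x sigma_pauli8_vtx[OF x(1)]
      sigma_pauli8_vtx[OF signed_perm_E8_roots[OF even_signed_perm_pauli8 x(1)]]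
    by simp
  also have "signed_perm (\<lambda>i. z_sign b (xor_perm a i)) (xor_perm a)
        (signed_perm (\<lambda>i. z_sign b' (xor_perm a' i)) (xor_perm a') x) =
      signed_perm (\<lambda>i. z_sign b (xor_perm a i) * z_sign b' (xor_perm a' (xor_perm a i)))
        (xor_perm a' \<circ> xor_perm a) x"
    by (rule signed_perm_signed_perm[OF xor_perm_lt])
  also have "\<dots> = signed_perm (\<lambda>i. commutation_sign b a' * z_sign ?b (xor_perm ?a i)) (xor_perm ?a) x"
  proof (rule signed_perm_cong)
    fix i :: nat assume i: "i < 8"
    show "z_sign b (xor_perm a i) * z_sign b' (xor_perm a' (xor_perm a i)) =
        commutation_sign b a' * z_sign ?b (xor_perm ?a i) \<and>
      (xor_perm a' \<circ> xor_perm a) i = xor_perm ?a i"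
      unfolding comp_apply using z_sign_commute[OF i] xor_perm_xor_perm[OF i] by (rule conjI)
  qed
  also have "vtx \<dots> = vtx (signed_perm (\<lambda>i. z_sign ?b (xor_perm ?a i)) (xor_perm ?a) x)"
    by (rule vtx_signed_perm_scale[OF commutation_sign_cases])
  also have "\<dots> = sigma (pauli8 ?a ?b) v"
    using x sigma_pauli8_vtx by simp
  finally show ?thesis .
qed

lemma sigma_pauli8_False:
  assumes "v \<in> V_E8"
  shows "sigma (pauli8 (\<lambda>_. False) (\<lambda>_. False)) v = v"
proof -
  obtain x where x: "x \<in> E8_roots" "v = vtx x"
    using assms by (auto simp: V_E8_def)
  have "length x = 8"
    using x by (auto simp: E8_roots_def)
  then have "signed_perm (\<lambda>i. z_sign (\<lambda>_. False) (xor_perm (\<lambda>_. False) i)) (xor_perm (\<lambda>_. False)) x = x"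
    by (intro nth_equalityI) (simp_all add: z_sign_def bit_sign_def xor_perm_id)
  then show ?thesis
    using x sigma_pauli8_vtx by simp
qed

lemma sigma_pauli8_in_Aut_E8: "sigma (pauli8 a b) \<in> carrier Aut_E8"
proof (rule sigma_in_Aut_E8[OF mulv8_pauli8 even_signed_perm_pauli8])
  fix v assume "v \<in> V_E8"
  then show "sigma (pauli8 a b) (sigma (pauli8 a b) v) = v"
    using sigma_pauli8_sigma_pauli8 sigma_pauli8_False by simp
qed

definition pair_root :: "nat \<Rightarrow> nat \<Rightarrow> real list" where
  "pair_root i j = map (\<lambda>k. if k = i \<or> k = j then 1 else 0) [0..<8]"

lemma length_pair_root [simp]: "length (pair_root i j) = 8"
  by (simp add: pair_root_def)

lemma nth_pair_root: "k < 8 \<Longrightarrow> pair_root i j ! k = (if k = i \<or> k = j then 1 else 0)"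
  by (simp add: pair_root_def)

lemma pair_root_E8_roots:
  assumes "i \<noteq> j" "i < 8" "j < 8"
  shows "pair_root i j \<in> E8_roots"
proof -
  have "pair_root i j = map (\<lambda>k. if k = i then 1 else if k = j then 1 else 0) [0..<8]"
    unfolding pair_root_def by (rule map_cong) auto
  then show ?thesis
    using E8_root_pair[OF assms, of 1 1] by simp
qed

lemma sigma_pauli8_id_imp_line_fixed:
  assumes id: "\<And>v. v \<in> V_E8 \<Longrightarrow> sigma (pauli8 a b) v = v" and x: "x \<in> E8_roots"
  shows "signed_perm (\<lambda>i. z_sign b (xor_perm a i)) (xor_perm a) x \<in> {x, map uminus x}"
  using id[of "vtx x"] sigma_pauli8_vtx[OF x] x by (auto simp: V_E8_def vtx_eq_iff)

lemma sigma_pauli8_id_imp_X_trivial: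
  assumes id: "\<And>v. v \<in> V_E8 \<Longrightarrow> sigma (pauli8 a b) v = v"
  shows "\<not> a 0 \<and> \<not> a 1 \<and> \<not> a 2"
proof -
  let ?g = "signed_perm (\<lambda>i. z_sign b (xor_perm a i)) (xor_perm a)"
  \<comment> \<open>the nonzero entry \<open>z_sign b 0\<close> of \<open>?g (pair_root 0 m)\<close> sits at position \<open>xor_perm a 0\<close>\<close>
  have "xor_perm a 0 \<in> {0, m}" if "m \<in> {1, 2}" for m
  proof -
    have j: "xor_perm a 0 < 8"
      by (simp add: xor_perm_lt)
    then have "?g (pair_root 0 m) ! xor_perm a 0 = z_sign b 0"
      by (simp add: xor_perm_involution nth_pair_root)
    then have "?g (pair_root 0 m) ! xor_perm a 0 \<noteq> 0"
      using z_sign_cases[of b 0] by auto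
    moreover have "?g (pair_root 0 m) \<in> {pair_root 0 m, map uminus (pair_root 0 m)}"
      using that by (intro sigma_pauli8_id_imp_line_fixed[OF id] pair_root_E8_roots) auto
    ultimately have "pair_root 0 m ! xor_perm a 0 \<noteq> 0"
      using j by (auto simp del: nth_signed_perm)
    then show ?thesis
      using j by (auto simp: nth_pair_root split: if_splits)
  qed
  then have "xor_perm a 0 \<in> {0, 1}" "xor_perm a 0 \<in> {0, 2}"
    by simp_all
  then show ?thesis
    by (auto simp: xor_perm_def bit_flip_def split: if_splits)
qed

lemma sigma_pauli8_id_imp_trivial:
  assumes id: "\<And>v. v \<in> V_E8 \<Longrightarrow> sigma (pauli8 a b) v = v" and "k < 3"
  shows "\<not> a k \<and> \<not> b k"
proof -
  let ?g = "signed_perm (\<lambda>i. z_sign b (xor_perm a i)) (xor_perm a)"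
  have a: "\<not> a 0" "\<not> a 1" "\<not> a 2"
    using sigma_pauli8_id_imp_X_trivial[OF id] by simp_all
  have z: "z_sign b m = 1" if "m \<in> {1, 2, 4}" for m
  proof -
    have m: "m < 8" "m \<noteq> 0"
      using that by auto
    have "?g (pair_root 0 m) \<in> {pair_root 0 m, map uminus (pair_root 0 m)}"
      using m by (intro sigma_pauli8_id_imp_line_fixed[OF id] pair_root_E8_roots) auto
    moreover have "?g (pair_root 0 m) ! 0 = 1" "map uminus (pair_root 0 m) ! 0 = -1"
      using a by (simp_all add: xor_perm_id nth_pair_root z_sign_def bit_sign_def)
    ultimately have "?g (pair_root 0 m) = pair_root 0 m"
      by (auto simp del: nth_signed_perm)
    then have "?g (pair_root 0 m) ! m = pair_root 0 m ! m"
      by (simp del: nth_signed_perm)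
    then show ?thesis
      using a m by (simp add: xor_perm_id nth_pair_root)
  qed
  have "\<not> b 0" "\<not> b 1" "\<not> b 2"
    using z[of 4] z[of 2] z[of 1] by (auto simp: z_sign_def bit_sign_def)
  moreover have "k = 0 \<or> k = 1 \<or> k = 2"
    using \<open>k < 3\<close> by auto
  ultimately show ?thesis
    using a by auto
qed

section \<open>The isomorphism with Z_2^6\<close>

abbreviation Z2_pow6 :: "(nat \<Rightarrow> int) monoid" where
  "Z2_pow6 \<equiv> product_group {..<6} (\<lambda>_. integer_mod_group 2)"

definition pauli_of :: "(nat \<Rightarrow> int) \<Rightarrow> nat \<Rightarrow> nat \<Rightarrow> real" where
  "pauli_of g = pauli8 (\<lambda>k. g k = 1) (\<lambda>k. g (k + 3) = 1)"

lemma carrier_Z2_pow6: "carrier Z2_pow6 = (\<Pi>\<^sub>E k\<in>{..<6}. {0, 1})"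
proof -
  have "{0..<int 2} = {0, 1}"
    by auto
  then show ?thesis
    by (simp add: carrier_integer_mod_group)
qed

lemma pauli_mats_eq: "pauli_mats = pauli_of ` carrier Z2_pow6"
proof
  show "pauli_of ` carrier Z2_pow6 \<subseteq> pauli_mats"
    unfolding pauli_mats_def paulis_eq pauli_of_def pauli8_def by blast
next
  show "pauli_mats \<subseteq> pauli_of ` carrier Z2_pow6"
  proof
    fix M assume "M \<in> pauli_mats"
    then obtain a0 b0 a1 b1 a2 b2
      where M: "M = kron3 (pauli a0 b0) (pauli a1 b1) (pauli a2 b2)"
      unfolding pauli_mats_def paulis_eq by blast
    define g where "g = (\<lambda>k\<in>{..<6}. if [a0, a1, a2, b0, b1, b2] ! k then 1 else 0 :: int)"
    have "g \<in> carrier Z2_pow6"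
      by (auto simp: carrier_Z2_pow6 g_def)
    moreover have "pauli_of g = M"
      by (simp add: M g_def pauli_of_def pauli8_def)
    ultimately show "M \<in> pauli_of ` carrier Z2_pow6"
      by blast
  qed
qed

lemma mult_Z2_pow6_eq_1:
  assumes "g \<in> carrier Z2_pow6" "h \<in> carrier Z2_pow6" "k < 6"
  shows "(g \<otimes>\<^bsub>Z2_pow6\<^esub> h) k = 1 \<longleftrightarrow> (g k = 1) \<noteq> (h k = 1)"
proof -
  have "(g \<otimes>\<^bsub>Z2_pow6\<^esub> h) k = (g k + h k) mod 2"
    using assms(3) by simp
  moreover have "g k \<in> {0, 1}" "h k \<in> {0, 1}"
    using PiE_mem[OF assms(1)[unfolded carrier_Z2_pow6]] PiE_mem[OF assms(2)[unfolded carrier_Z2_pow6]]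
      assms(3)
    by simp_all
  ultimately show ?thesis
    by auto
qed

lemma pauli_of_mult:
  assumes "g \<in> carrier Z2_pow6" "h \<in> carrier Z2_pow6"
  shows "pauli_of (g \<otimes>\<^bsub>Z2_pow6\<^esub> h) =
    pauli8 (\<lambda>k. (g k = 1) \<noteq> (h k = 1)) (\<lambda>k. (g (k + 3) = 1) \<noteq> (h (k + 3) = 1))"
  unfolding pauli_of_def pauli8_def
  by (simp del: mult_product_group add: mult_Z2_pow6_eq_1[OF assms])

lemma sigma_pauli_of_mult:
  assumes g: "g \<in> carrier Z2_pow6" and h: "h \<in> carrier Z2_pow6"
  shows "sigma (pauli_of (g \<otimes>\<^bsub>Z2_pow6\<^esub> h)) = sigma (pauli_of g) \<otimes>\<^bsub>Aut_E8\<^esub> sigma (pauli_of h)"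
proof -
  have "sigma (pauli_of (g \<otimes>\<^bsub>Z2_pow6\<^esub> h)) = compose V_E8 (sigma (pauli_of g)) (sigma (pauli_of h))"
  proof
    fix v
    show "sigma (pauli_of (g \<otimes>\<^bsub>Z2_pow6\<^esub> h)) v = compose V_E8 (sigma (pauli_of g)) (sigma (pauli_of h)) v"
    proof (cases "v \<in> V_E8")
      case True
      then show ?thesis
        unfolding compose_def pauli_of_mult[OF g h] unfolding pauli_of_def
        using sigma_pauli8_sigma_pauli8 by simp
    next
      case False
      then show ?thesis
        by (simp add: compose_def sigma_def)
    qed
  qed
  also have "\<dots> = sigma (pauli_of g) \<otimes>\<^bsub>Aut_E8\<^esub> sigma (pauli_of h)"
    by (simp add: mult_Aut_E8 pauli_of_def sigma_pauli8_in_Aut_E8)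
  finally show ?thesis .
qed

lemma group_hom_sigma_pauli_of: "group_hom Z2_pow6 Aut_E8 (\<lambda>g. sigma (pauli_of g))"
proof -
  have "(\<lambda>g. sigma (pauli_of g)) \<in> hom Z2_pow6 Aut_E8"
  proof (rule homI)
    fix g
    show "sigma (pauli_of g) \<in> carrier Aut_E8"
      unfolding pauli_of_def by (rule sigma_pauli8_in_Aut_E8)
  next
    fix g h assume "g \<in> carrier Z2_pow6" "h \<in> carrier Z2_pow6"
    then show "sigma (pauli_of (g \<otimes>\<^bsub>Z2_pow6\<^esub> h)) = sigma (pauli_of g) \<otimes>\<^bsub>Aut_E8\<^esub> sigma (pauli_of h)"
      by (rule sigma_pauli_of_mult)
  qed
  then show ?thesis
    by (simp add: group_hom_def group_hom_axioms_def group_Aut_E8)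
qed

lemma sigma_pauli_of_eq_one:
  assumes g: "g \<in> carrier Z2_pow6" and one: "sigma (pauli_of g) = \<one>\<^bsub>Aut_E8\<^esub>"
  shows "g = \<one>\<^bsub>Z2_pow6\<^esub>"
proof
  have "sigma (pauli_of g) v = v" if "v \<in> V_E8" for v
    using one that by (simp add: Aut_E8_def BijGroup_def)
  then have not_one: "g k \<noteq> 1 \<and> g (k + 3) \<noteq> 1" if "k < 3" for k
    using sigma_pauli8_id_imp_trivial that unfolding pauli_of_def by blast
  fix k
  show "g k = \<one>\<^bsub>Z2_pow6\<^esub> k"
  proof (cases "k < 6")
    case True
    have "g k \<in> {0, 1}"
      using PiE_mem[OF g[unfolded carrier_Z2_pow6]] True by simp
    moreover have "g k \<noteq> 1"
      using not_one[of k] not_one[of "k - 3"] True by (cases "k < 3") simp_all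
    ultimately show ?thesis
      using True by simp
  next
    case False
    then show ?thesis
      using PiE_arb[OF g[unfolded carrier_Z2_pow6]] by simp
  qed
qed

theorem lemma3p2:
  shows "(\<forall>M \<in> pauli_mats.
            (\<forall>x \<in> E8_roots. mulv8 M x \<in> E8_roots) \<and>
            (\<forall>x \<in> E8_roots. sigma M (vtx x) = vtx (mulv8 M x)) \<and>
            sigma M \<in> carrier Aut_E8)
       \<and> subgroup L_E8 Aut_E8
       \<and> Aut_E8\<lparr>carrier := L_E8\<rparr> \<cong> product_group {..<(6::nat)} (\<lambda>_. integer_mod_group 2)"
proof (intro conjI ballI)
  fix M assume "M \<in> pauli_mats"
  then obtain a b where M: "M = pauli8 a b"
    unfolding pauli_mats_eq pauli_of_def by blast
  show "mulv8 M x \<in> E8_roots" if "x \<in> E8_roots" for x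
    using signed_perm_E8_roots[OF even_signed_perm_pauli8 that] by (simp add: M mulv8_pauli8)
  show "sigma M (vtx x) = vtx (mulv8 M x)" if "x \<in> E8_roots" for x
    using sigma_pauli8_vtx[OF that] by (simp add: M mulv8_pauli8)
  show "sigma M \<in> carrier Aut_E8"
    unfolding M by (rule sigma_pauli8_in_Aut_E8)
next
  interpret sigma: group_hom Z2_pow6 Aut_E8 "\<lambda>g. sigma (pauli_of g)"
    by (rule group_hom_sigma_pauli_of)
  have L: "L_E8 = (\<lambda>g. sigma (pauli_of g)) ` carrier Z2_pow6"
    by (simp add: L_E8_def pauli_mats_eq image_image)
  show "subgroup L_E8 Aut_E8"
    unfolding L by (rule sigma.img_is_subgroup)
  have "group_hom Z2_pow6 (Aut_E8\<lparr>carrier := L_E8\<rparr>) (\<lambda>g. sigma (pauli_of g))"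
    using sigma.induced_group_hom[OF sigma.G.subgroup_self] unfolding L
    by (simp del: carrier_product_group)
  then have "(\<lambda>g. sigma (pauli_of g)) \<in> iso Z2_pow6 (Aut_E8\<lparr>carrier := L_E8\<rparr>)"
    using sigma_pauli_of_eq_one by (simp add: group_hom.iso_iff L del: carrier_product_group)
  then show "Aut_E8\<lparr>carrier := L_E8\<rparr> \<cong> Z2_pow6"
    using sigma.G.iso_sym is_isoI by blast
qed

end
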